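(* Let $n,m\in\mathbb{N}$, let $\mathcal{Y}\subset\mathbb{R}^m$ be nonempty, convex and compact, and let $f:2^{[n]}\times\mathbb{R}^m\to\mathbb{R}$ be such that $f(\cdot,y)$ is submodular for every $y$ and $f(S,\cdot)$ is concave and continuous for every $S\subset[n]$. Let $f^L$ be the Lovász extension of $f$ with respect to the first variable and let $\zeta(x)=\max_{y\in\mathcal{Y}}f^L(x,y)$ for $x\in[0,1]^n$. Suppose at least one of the following holds: (i) $\zeta$ is the Lovász extension of some submodular function $g:2^{[n]}\to\mathbb{R}$; (ii) the set of minimisers of $\zeta$ over $[0,1]^n$ contains a point of $\{0,1\}^n$; (iii) there exists $\bar x\in\{0,1\}^n$ such that $\bar x$ minimises $f^L(\cdot,y)$ over $[0,1]^n$ for every $y\in\mathcal{Y}$. Then $\min_{x\in[0,1]^n}\max_{y\in\mathcal{Y}}f^L(x,y)=\min_{x\in\{0,1\}^n}\max_{y\in\mathcal{Y}}f^L(x,y)$, and $f$ admits a saddle point on $2^{[n]}\times\mathcal{Y}$.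
   Context: $[n]=\{1,\dots,n\}$; subsets $S\subset[n]$ are identified with their indicator vectors in $\{0,1\}^n$. A set function $g:2^{[n]}\to\mathbb{R}$ is submodular if $g(S)+g(T)\ge g(S\cap T)+g(S\cup T)$ for all $S,T\subset[n]$. Lovász extension: for $g:2^{[n]}\to\mathbb{R}$ and $x\in[0,1]^n$, choose a permutation $(j_1,\dots,j_n)$ of $[n]$ with $x_{j_1}\ge\dots\ge x_{j_n}$ and set $g^L(x)=(1-x_{j_1})\,g(\emptyset)+\sum_{k=1}^{n-1}(x_{j_k}-x_{j_{k+1}})\,g(\{j_1,\dots,j_k\})+x_{j_n}\,g([n])$. For $f:2^{[n]}\times\mathbb{R}^m\to\mathbb{R}$, the Lovász extension with respect to the first variable is $f^L(x,y):=(f(\cdot,y))^L(x)$. A saddle point of $f$ on $2^{[n]}\times\mathcal{Y}$ is a pair $(S^*,y^* )$ with $f(S^*,y)\le f(S^*,y^* )\le f(S,y^* )$ for all $S\subset[n]$, $y\in\mathcal{Y}$. *)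

theory Defs
  imports "HOL-Analysis.Analysis" "HOL-Combinatorics.Permutations"
begin

text \<open>Ground set [n] = {1..n}; subsets S of [n] are identified with indicator
vectors; points of [0,1]^n are functions nat => real that lie in [0,1] on {1..n}
and vanish outside {1..n}.\<close>

definition submodular :: "nat \<Rightarrow> (nat set \<Rightarrow> real) \<Rightarrow> bool" where
  "submodular n g \<longleftrightarrow>
     (\<forall>S T. S \<subseteq> {1..n} \<longrightarrow> T \<subseteq> {1..n} \<longrightarrow> g S + g T \<ge> g (S \<inter> T) + g (S \<union> T))"

definition unit_cube :: "nat \<Rightarrow> (nat \<Rightarrow> real) set" where
  "unit_cube n = {x. (\<forall>i\<in>{1..n}. 0 \<le> x i \<and> x i \<le> 1) \<and> (\<forall>i. i \<notin> {1..n} \<longrightarrow> x i = 0)}"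

definition ind_vec :: "nat set \<Rightarrow> nat \<Rightarrow> real" where
  "ind_vec S = (\<lambda>i. if i \<in> S then 1 else 0)"

definition sort_perm :: "nat \<Rightarrow> (nat \<Rightarrow> real) \<Rightarrow> nat \<Rightarrow> nat" where
  "sort_perm n x = (SOME p. p permutes {1..n} \<and> (\<forall>k\<in>{1..<n}. x (p (Suc k)) \<le> x (p k)))"

definition lovasz :: "nat \<Rightarrow> (nat set \<Rightarrow> real) \<Rightarrow> (nat \<Rightarrow> real) \<Rightarrow> real" where
  "lovasz n g x =
     (if n = 0 then g {} else
      (let j = sort_perm n x in
        (1 - x (j 1)) * g {}
        + (\<Sum>k\<in>{1..<n}. (x (j k) - x (j (Suc k))) * g (j ` {1..k}))
        + x (j n) * g {1..n}))"

end

theory Submission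
  imports Defs
begin

(*
  If x = sum_T l_T 1_T is a convex combination of vertices of the cube, the greedy inequality
  for a submodular g gives g^L(x) <= sum_T l_T g(T).  Each of the three hypotheses yields a
  vertex 1_S minimising zeta over the cube, whence the two minima agree; put
  v = zeta(1_S) = max_y f(S,y).  If every y in Y had some T with f(T,y) < v, then, by induction
  on the finite family of concave continuous functions f(T,.) - v and a separating line in the
  plane for two of them, a single convex combination sum_T l_T (f(T,y) - v) would be negative
  on all of Y.  The point x = sum_T l_T 1_T would then have zeta(x) < v.  Hence some y has
  f(T,y) >= v >= f(S,y') for all T and y', and (S,y) is a saddle point.
*)

section \<open>The Lovasz extension\<close>

lemma sorting_permutation_exists:
  fixes x :: "nat \<Rightarrow> real"
  shows "\<exists>p. p permutes {1..n} \<and> (\<forall>k\<in>{1..<n}. x (p (Suc k)) \<le> x (p k))"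
proof -
  define L where "L = sort_key (\<lambda>i. - x i) [1..<Suc n]"
  have L: "distinct L" "set L = {1..n}" "length L = n" "sorted (map (\<lambda>i. - x i) L)"
    by (auto simp: L_def)
  define p where "p k = (if k \<in> {1..n} then L ! (k - 1) else k)" for k
  have "bij_betw (\<lambda>k. k - 1) {1..n} {..<n}"
    by (rule bij_betw_byWitness[where f' = Suc]) auto
  moreover have "bij_betw ((!) L) {..<n} {1..n}"
    using L by (intro bij_betw_nth) auto
  ultimately have "bij_betw (\<lambda>k. L ! (k - 1)) {1..n} {1..n}"
    by (auto dest: bij_betw_trans simp: comp_def)
  then have "bij_betw p {1..n} {1..n}"
    by (rule bij_betw_cong[THEN iffD1, rotated]) (simp add: p_def)
  then have "p permutes {1..n}"
    by (rule bij_imp_permutes) (auto simp: p_def)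
  moreover have "x (p (Suc k)) \<le> x (p k)" if "k \<in> {1..<n}" for k
  proof -
    have "map (\<lambda>i. - x i) L ! (k - 1) \<le> map (\<lambda>i. - x i) L ! k"
      using L that by (intro sorted_nth_mono) auto
    moreover have "k - 1 < length L" "k < length L" using L that by auto
    ultimately show ?thesis using that by (simp add: p_def)
  qed
  ultimately show ?thesis by blast
qed

lemma sort_perm_permutes: "sort_perm n x permutes {1..n}"
  and sort_perm_sorted: "k \<in> {1..<n} \<Longrightarrow> x (sort_perm n x (Suc k)) \<le> x (sort_perm n x k)"
  using someI_ex[OF sorting_permutation_exists[of n x]] by (simp_all add: sort_perm_def)

lemma sort_perm_antimono:
  assumes "1 \<le> k'" "k' \<le> k" "k \<le> n"
  shows "x (sort_perm n x k) \<le> x (sort_perm n x k')"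
  using assms(2,3)
proof (induction k rule: dec_induct)
  case (step m)
  then have "x (sort_perm n x (Suc m)) \<le> x (sort_perm n x m)"
    using assms(1) by (intro sort_perm_sorted) auto
  with step show ?case by simp
qed simp

lemma permutes_image_atLeastAtMost_subset:
  fixes n k :: nat
  assumes "p permutes {1..n}" "k \<le> n"
  shows "p ` {1..k} \<subseteq> {1..n}"
proof -
  have "p ` {1..k} \<subseteq> p ` {1..n}" using assms(2) by (intro image_mono) auto
  then show ?thesis using permutes_image[OF assms(1)] by simp
qed

lemma sum_weighted_differences_eq:
  fixes a G :: "nat \<Rightarrow> real"
  assumes "1 \<le> n"
  shows "(1 - a 1) * G 0 + (\<Sum>k\<in>{1..<n}. (a k - a (Suc k)) * G k) + a n * G n
     = G 0 + (\<Sum>m<n. a (Suc m) * (G (Suc m) - G m))"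
  using assms
proof (induction n rule: dec_induct)
  case (step n)
  then show ?case by (simp add: algebra_simps)
qed (simp add: algebra_simps)

lemma lovasz_eq_sum_increments:
  "lovasz n g x = g {} + (\<Sum>m<n. x (sort_perm n x (Suc m)) *
      (g (sort_perm n x ` {1..Suc m}) - g (sort_perm n x ` {1..m})))"
proof (cases "n = 0")
  case True then show ?thesis by (simp add: lovasz_def)
next
  case False
  define j where "j = sort_perm n x"
  have "g {1..n} = g (j ` {1..n})"
    using permutes_image[OF sort_perm_permutes] by (simp add: j_def)
  then show ?thesis
    using False sum_weighted_differences_eq[of n "\<lambda>k. x (j k)" "\<lambda>k. g (j ` {1..k})"]
    by (simp add: lovasz_def Let_def j_def)
qed

lemma lovasz_const: "lovasz n (\<lambda>_. c) x = c"
  by (simp add: lovasz_eq_sum_increments)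

lemma lovasz_mono:
  assumes x: "x \<in> unit_cube n" and le: "\<And>T. T \<subseteq> {1..n} \<Longrightarrow> g T \<le> h T"
  shows "lovasz n g x \<le> lovasz n h x"
proof (cases "n = 0")
  case True then show ?thesis using le[of "{}"] by (simp add: lovasz_def)
next
  case False
  define j where "j = sort_perm n x"
  have x01: "0 \<le> x (j k) \<and> x (j k) \<le> 1" if "k \<in> {1..n}" for k
    using x permutes_in_image[OF sort_perm_permutes] that by (auto simp: unit_cube_def j_def)
  have "(1 - x (j 1)) * g {} \<le> (1 - x (j 1)) * h {}"
    using x01[of 1] False le[of "{}"] by (intro mult_left_mono) auto
  moreover have "(\<Sum>k\<in>{1..<n}. (x (j k) - x (j (Suc k))) * g (j ` {1..k}))
      \<le> (\<Sum>k\<in>{1..<n}. (x (j k) - x (j (Suc k))) * h (j ` {1..k}))"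
    using sort_perm_sorted le permutes_image_atLeastAtMost_subset[OF sort_perm_permutes]
    by (intro sum_mono mult_left_mono) (auto simp: j_def)
  moreover have "x (j n) * g {1..n} \<le> x (j n) * h {1..n}"
    using x01[of n] False le[of "{1..n}"] by (intro mult_left_mono) auto
  ultimately show ?thesis
    using False by (simp add: lovasz_def Let_def j_def[symmetric])
qed

lemma downward_closed_eq_atLeastAtMost_card:
  fixes K :: "nat set"
  assumes "K \<subseteq> {1..n}" and down: "\<And>k k'. k \<in> K \<Longrightarrow> 1 \<le> k' \<Longrightarrow> k' \<le> k \<Longrightarrow> k' \<in> K"
  shows "K = {1..card K}"
proof (cases "K = {}")
  case False
  have fin: "finite K" using assms(1) finite_subset by blast
  have "K = {1..Max K}"
  proof
    show "K \<subseteq> {1..Max K}" using assms(1) fin by auto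
    show "{1..Max K} \<subseteq> K" using down Max_in[OF fin False] by auto
  qed
  then show ?thesis by (metis card_atLeastAtMost diff_Suc_1)
qed simp

lemma sort_perm_ind_vec_iff:
  assumes S: "S \<subseteq> {1..n}" and k: "k \<in> {1..n}"
  shows "sort_perm n (ind_vec S) k \<in> S \<longleftrightarrow> k \<le> card S"
proof -
  define j where "j = sort_perm n (ind_vec S)"
  define K where "K = {k\<in>{1..n}. j k \<in> S}"
  have jp: "j permutes {1..n}" unfolding j_def by (rule sort_perm_permutes)
  have "j ` K = S"
  proof
    show "j ` K \<subseteq> S" by (auto simp: K_def)
    show "S \<subseteq> j ` K"
    proof
      fix s assume "s \<in> S"
      then obtain k where "k \<in> {1..n}" "s = j k" using S permutes_image[OF jp] by blast
      with \<open>s \<in> S\<close> show "s \<in> j ` K" by (auto simp: K_def)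
    qed
  qed
  then have "card K = card S"
    using card_image[OF permutes_inj_on[OF jp], of K] by argo
  moreover have "K = {1..card K}"
  proof (rule downward_closed_eq_atLeastAtMost_card)
    show "K \<subseteq> {1..n}" by (auto simp: K_def)
    fix k k' assume "k \<in> K" "1 \<le> k'" "k' \<le> k"
    moreover have "ind_vec S (j k) \<le> ind_vec S (j k')"
      using calculation by (auto simp: j_def K_def intro: sort_perm_antimono)
    ultimately show "k' \<in> K" by (auto simp: K_def ind_vec_def split: if_splits)
  qed
  ultimately have "K = {1..card S}" by simp
  moreover have "j k \<in> S \<longleftrightarrow> k \<in> K" using k by (simp add: K_def)
  ultimately show ?thesis using k by (simp add: j_def)
qed

lemma lovasz_ind_vec:
  assumes S: "S \<subseteq> {1..n}"
  shows "lovasz n g (ind_vec S) = g S"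
proof -
  define j where "j = sort_perm n (ind_vec S)"
  define G where "G k = g (j ` {1..k})" for k
  have cS: "card S \<le> n" using card_mono[OF _ S] by simp
  have prefix: "j k \<in> S \<longleftrightarrow> k \<le> card S" if "k \<in> {1..n}" for k
    using sort_perm_ind_vec_iff[OF S that] by (simp add: j_def)
  have "j ` {1..card S} = S"
  proof
    show "j ` {1..card S} \<subseteq> S" using prefix cS by auto
    show "S \<subseteq> j ` {1..card S}"
    proof
      fix s assume "s \<in> S"
      then have "s \<in> j ` {1..n}"
        using S permutes_image[OF sort_perm_permutes] by (auto simp: j_def)
      then obtain k where "k \<in> {1..n}" "s = j k" by blast
      with prefix \<open>s \<in> S\<close> show "s \<in> j ` {1..card S}" by auto
    qed
  qed
  have "lovasz n g (ind_vec S) = g {} + (\<Sum>m<n. ind_vec S (j (Suc m)) * (G (Suc m) - G m))"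
    unfolding lovasz_eq_sum_increments G_def j_def by simp
  also have "(\<Sum>m<n. ind_vec S (j (Suc m)) * (G (Suc m) - G m)) = (\<Sum>m<card S. G (Suc m) - G m)"
  proof -
    have "(\<Sum>m<n. ind_vec S (j (Suc m)) * (G (Suc m) - G m))
        = (\<Sum>m\<in>{..<n} \<inter> {..<card S}. G (Suc m) - G m)"
      by (subst sum.inter_restrict) (auto simp: ind_vec_def prefix intro!: sum.cong)
    also have "{..<n} \<inter> {..<card S} = {..<card S}" using cS by auto
    finally show ?thesis .
  qed
  also have "\<dots> = G (card S) - G 0" by (rule sum_lessThan_telescope)
  finally show ?thesis using \<open>j ` {1..card S} = S\<close> by (simp add: G_def)
qed

lemma ind_vec_in_unit_cube: "S \<subseteq> {1..n} \<Longrightarrow> ind_vec S \<in> unit_cube n"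
  by (auto simp: unit_cube_def ind_vec_def)

lemma lovasz_attains_min_at_vertex:
  "\<exists>S\<subseteq>{1..n}. \<forall>x\<in>unit_cube n. lovasz n g (ind_vec S) \<le> lovasz n g x"
proof -
  obtain S where S: "S \<subseteq> {1..n}" and min: "\<And>T. T \<subseteq> {1..n} \<Longrightarrow> g S \<le> g T"
    using ex_is_arg_min_if_finite[of "Pow {1..n}" g] by (auto simp: is_arg_min_linorder)
  have "lovasz n g (ind_vec S) \<le> lovasz n g x" if "x \<in> unit_cube n" for x
    using lovasz_mono[OF that min] by (simp add: lovasz_ind_vec[OF S] lovasz_const)
  with S show ?thesis by blast
qed

lemma submodular_increments_le:
  assumes sm: "submodular n g" and p: "p permutes {1..n}" and T: "T \<subseteq> {1..n}"
  shows "r \<le> n \<Longrightarrow> (\<Sum>m<r. ind_vec T (p (Suc m)) * (g (p ` {1..Suc m}) - g (p ` {1..m})))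
     \<le> g (p ` {1..r} \<inter> T) - g {}"
proof (induction r)
  case (Suc r)
  define A where "A = p ` {1..r}"
  define a where "a = p (Suc r)"
  have ins: "p ` {1..Suc r} = insert a A" by (auto simp: A_def a_def atLeastAtMostSuc_conv)
  have "a \<notin> A"
  proof
    assume "a \<in> A"
    then obtain i where "i \<in> {1..r}" "p (Suc r) = p i" by (auto simp: A_def a_def)
    then show False using injD[OF permutes_inj[OF p]] by fastforce
  qed
  have "insert a A \<subseteq> {1..n}"
    using permutes_image_atLeastAtMost_subset[OF p Suc.prems] ins by simp
  then have A: "A \<subseteq> {1..n}" and a: "a \<in> {1..n}" by auto
  have IH: "(\<Sum>m<r. ind_vec T (p (Suc m)) * (g (p ` {1..Suc m}) - g (p ` {1..m})))
      \<le> g (A \<inter> T) - g {}"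
    using Suc by (simp add: A_def)
  have "ind_vec T a * (g (insert a A) - g A) \<le> g (insert a A \<inter> T) - g (A \<inter> T)"
  proof (cases "a \<in> T")
    case True
    \<comment> \<open>diminishing returns: adding a to A gains at most what adding it to A \<inter> T gains\<close>
    have "g (A \<inter> insert a (A \<inter> T)) + g (A \<union> insert a (A \<inter> T)) \<le> g A + g (insert a (A \<inter> T))"
    proof -
      have "insert a (A \<inter> T) \<subseteq> {1..n}" using A a by auto
      with sm A show ?thesis unfolding submodular_def by (simp only: add_ac)
    qed
    moreover have "A \<inter> insert a (A \<inter> T) = A \<inter> T" using \<open>a \<notin> A\<close> by auto
    moreover have "A \<union> insert a (A \<inter> T) = insert a A" by auto
    moreover have "insert a A \<inter> T = insert a (A \<inter> T)" using True by auto
    ultimately show ?thesis using True by (simp add: ind_vec_def)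
  qed (simp add: ind_vec_def)
  with IH show ?case
    unfolding sum.lessThan_Suc ins A_def[symmetric] a_def[symmetric] by linarith
qed simp

lemma sum_ind_vec_in_unit_cube:
  assumes "\<And>T. T \<in> Pow {1..n} \<Longrightarrow> 0 \<le> l T" "sum l (Pow {1..n}) = 1"
  shows "(\<lambda>i. \<Sum>T\<in>Pow {1..n}. l T * ind_vec T i) \<in> unit_cube n"
proof -
  have "(\<Sum>T\<in>Pow {1..n}. l T * ind_vec T i) \<le> (\<Sum>T\<in>Pow {1..n}. l T)" for i
    using assms(1) by (intro sum_mono) (auto simp: ind_vec_def)
  moreover have "0 \<le> (\<Sum>T\<in>Pow {1..n}. l T * ind_vec T i)" for i
    using assms(1) by (intro sum_nonneg) (auto simp: ind_vec_def)
  moreover have "(\<Sum>T\<in>Pow {1..n}. l T * ind_vec T i) = 0" if "i \<notin> {1..n}" for i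
    using that by (intro sum.neutral) (auto simp: ind_vec_def)
  ultimately show ?thesis using assms(2) by (simp add: unit_cube_def)
qed

lemma lovasz_le_convex_combination:
  assumes sm: "submodular n g"
    and l: "\<And>T. T \<in> Pow {1..n} \<Longrightarrow> 0 \<le> l T" "sum l (Pow {1..n}) = 1"
  shows "lovasz n g (\<lambda>i. \<Sum>T\<in>Pow {1..n}. l T * ind_vec T i) \<le> (\<Sum>T\<in>Pow {1..n}. l T * g T)"
proof -
  define x where "x i = (\<Sum>T\<in>Pow {1..n}. l T * ind_vec T i)" for i
  define j where "j = sort_perm n x"
  define D where "D m = g (j ` {1..Suc m}) - g (j ` {1..m})" for m
  have "lovasz n g x = g {} + (\<Sum>m<n. x (j (Suc m)) * D m)"
    unfolding lovasz_eq_sum_increments j_def D_def by simp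
  also have "(\<Sum>m<n. x (j (Suc m)) * D m) = (\<Sum>T\<in>Pow {1..n}. l T * (\<Sum>m<n. ind_vec T (j (Suc m)) * D m))"
    unfolding x_def by (simp add: sum_distrib_left sum_distrib_right mult.assoc) (rule sum.swap)
  also have "\<dots> \<le> (\<Sum>T\<in>Pow {1..n}. l T * (g T - g {}))"
  proof (rule sum_mono)
    fix T assume T: "T \<in> Pow {1..n}"
    have "j ` {1..n} \<inter> T = T" using permutes_image[OF sort_perm_permutes] T by (auto simp: j_def)
    then have "(\<Sum>m<n. ind_vec T (j (Suc m)) * D m) \<le> g T - g {}"
      using submodular_increments_le[OF sm sort_perm_permutes[of n x], of T n] T
      by (simp add: D_def j_def)
    then show "l T * (\<Sum>m<n. ind_vec T (j (Suc m)) * D m) \<le> l T * (g T - g {})"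
      using l(1)[OF T] by (rule mult_left_mono)
  qed
  also have "g {} + (\<Sum>T\<in>Pow {1..n}. l T * (g T - g {})) = (\<Sum>T\<in>Pow {1..n}. l T * g T)"
    using l(2) by (simp add: right_diff_distrib sum_subtractf flip: sum_distrib_right)
  finally show ?thesis unfolding x_def by simp
qed

lemma continuous_on_lovasz:
  assumes "\<And>S. S \<subseteq> {1..n} \<Longrightarrow> continuous_on Y (f S)"
  shows "continuous_on Y (\<lambda>y. lovasz n (\<lambda>S. f S y) x)"
proof -
  define j where "j = sort_perm n x"
  have "continuous_on Y (f (j ` {1..k}))" if "k \<le> n" for k
    using assms permutes_image_atLeastAtMost_subset[OF sort_perm_permutes that] by (simp add: j_def)
  with assms[of "{}"] show ?thesis
    unfolding lovasz_eq_sum_increments j_def[symmetric]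
    by (intro continuous_on_add continuous_on_sum continuous_on_mult continuous_on_const
        continuous_on_diff) auto
qed

section \<open>Negative convex combinations of concave functions\<close>

lemma concave_on_ge_combination:
  assumes "concave_on Y k" "y1 \<in> Y" "y2 \<in> Y" "0 \<le> u" "0 \<le> v" "u + v = 1"
    and "a1 \<le> k y1" "a2 \<le> k y2"
  shows "u * a1 + v * a2 \<le> k (u *\<^sub>R y1 + v *\<^sub>R y2)"
proof -
  have "u * a1 + v * a2 \<le> u * k y1 + v * k y2"
    using assms(4,5,7,8) by (intro add_mono mult_left_mono)
  also have "\<dots> \<le> k (u *\<^sub>R y1 + v *\<^sub>R y2)"
    using assms(1-6) unfolding concave_on_iff by blast
  finally show ?thesis .
qed

lemma concave_on_subset: "concave_on T f \<Longrightarrow> S \<subseteq> T \<Longrightarrow> convex S \<Longrightarrow> concave_on S f"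
  unfolding concave_on_def by (rule convex_on_subset)

lemma compact_superlevel_set:
  fixes k :: "'b::t2_space \<Rightarrow> real"
  assumes "compact Y" "continuous_on Y k"
  shows "compact {y\<in>Y. c \<le> k y}"
proof -
  have "closed {y\<in>Y. c \<le> k y}"
    using assms by (intro continuous_on_closed_Collect_le continuous_on_const compact_imp_closed)
  from compact_Int_closed[OF assms(1) this] show ?thesis
    by (simp add: Int_absorb1 Collect_conj_eq Int_assoc)
qed

lemma convex_superlevel_set:
  assumes "concave_on Y k"
  shows "convex {y\<in>Y. c \<le> k y}"
proof (rule convexI)
  fix y1 y2 and u v :: real
  assume "y1 \<in> {y\<in>Y. c \<le> k y}" "y2 \<in> {y\<in>Y. c \<le> k y}" "0 \<le> u" "0 \<le> v" "u + v = 1"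
  moreover from this have "u * c + v * c \<le> k (u *\<^sub>R y1 + v *\<^sub>R y2)"
    using assms by (intro concave_on_ge_combination) auto
  ultimately show "u *\<^sub>R y1 + v *\<^sub>R y2 \<in> {y\<in>Y. c \<le> k y}"
    using assms by (auto simp: concave_on_iff convexD simp flip: distrib_right)
qed

lemma convex_hypograph_pair:
  assumes "concave_on Y k" "concave_on Y h"
  shows "convex {z :: real \<times> real. \<exists>y\<in>Y. fst z \<le> k y \<and> snd z \<le> h y}"
proof (rule convexI)
  fix z1 z2 :: "real \<times> real" and u v :: real
  assume "z1 \<in> {z. \<exists>y\<in>Y. fst z \<le> k y \<and> snd z \<le> h y}" "z2 \<in> {z. \<exists>y\<in>Y. fst z \<le> k y \<and> snd z \<le> h y}"
    and uv: "0 \<le> u" "0 \<le> v" "u + v = 1"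
  then obtain y1 y2 where y1: "y1 \<in> Y" "fst z1 \<le> k y1" "snd z1 \<le> h y1"
    and y2: "y2 \<in> Y" "fst z2 \<le> k y2" "snd z2 \<le> h y2" by blast
  have "u *\<^sub>R y1 + v *\<^sub>R y2 \<in> Y"
    using assms(1) y1 y2 uv by (auto simp: concave_on_iff convexD)
  moreover have "u * fst z1 + v * fst z2 \<le> k (u *\<^sub>R y1 + v *\<^sub>R y2)"
    and "u * snd z1 + v * snd z2 \<le> h (u *\<^sub>R y1 + v *\<^sub>R y2)"
    using assms y1 y2 uv by (auto intro: concave_on_ge_combination)
  ultimately show "u *\<^sub>R z1 + v *\<^sub>R z2 \<in> {z. \<exists>y\<in>Y. fst z \<le> k y \<and> snd z \<le> h y}"
    by auto
qed

lemma concave_on_sum_scaled: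
  fixes h :: "'i \<Rightarrow> 'b::real_vector \<Rightarrow> real"
  assumes "finite I" "convex Y" "\<And>i. i \<in> I \<Longrightarrow> 0 \<le> c i" "\<And>i. i \<in> I \<Longrightarrow> concave_on Y (h i)"
  shows "concave_on Y (\<lambda>y. \<Sum>i\<in>I. c i * h i y)"
  using assms by (induction I rule: finite_induct) (auto simp: concave_on_const intro!: concave_on_add)

lemma nonneg_if_bounded_on_ray:
  fixes a :: real
  assumes "\<And>s. 0 \<le> s \<Longrightarrow> c - a * s \<le> b"
  shows "0 \<le> a"
proof (rule ccontr)
  assume "\<not> 0 \<le> a"
  then have "c - a * ((\<bar>b - c\<bar> + 1) / - a) \<le> b"
    by (intro assms) (simp add: divide_nonneg_neg)
  moreover have "a * ((\<bar>b - c\<bar> + 1) / - a) = - (\<bar>b - c\<bar> + 1)"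
    using \<open>\<not> 0 \<le> a\<close> by simp
  ultimately show False by arith
qed

(* The set Z is convex, downward closed and misses (c/2, c/2), where c < 0 is the maximum of
   min k h on Y; a line separating them therefore has a nonnegative normal. *)
lemma concave_pair_nonneg_combination_neg:
  fixes Y :: "'b::real_normed_vector set" and k h :: "'b \<Rightarrow> real"
  assumes Y: "compact Y" "Y \<noteq> {}"
    and conc: "concave_on Y k" "concave_on Y h"
    and cont: "continuous_on Y k" "continuous_on Y h"
    and neg: "\<And>y. y \<in> Y \<Longrightarrow> k y < 0 \<or> h y < 0"
  shows "\<exists>a1 a2. 0 \<le> a1 \<and> 0 \<le> a2 \<and> 0 < a1 + a2 \<and> (\<forall>y\<in>Y. a1 * k y + a2 * h y < 0)"
proof -
  obtain y0 where y0: "y0 \<in> Y" and max: "\<And>y. y \<in> Y \<Longrightarrow> min (k y) (h y) \<le> min (k y0) (h y0)"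
    using continuous_attains_sup[OF Y continuous_on_min[OF cont]] by blast
  define c where "c = min (k y0) (h y0)"
  have "c < 0" using neg[OF y0] by (auto simp: c_def)
  define Z where "Z = {z :: real \<times> real. \<exists>y\<in>Y. fst z \<le> k y \<and> snd z \<le> h y}"
  have Z_down: "(k y - s, h y - r) \<in> Z" if "y \<in> Y" "0 \<le> s" "0 \<le> r" for y s r
    using that unfolding Z_def by force
  have "(c/2, c/2) \<notin> Z"
  proof
    assume "(c/2, c/2) \<in> Z"
    then obtain y where "y \<in> Y" "c/2 \<le> k y" "c/2 \<le> h y" by (auto simp: Z_def)
    with max[of y] \<open>c < 0\<close> show False by (auto simp: c_def)
  qed
  then obtain a b where "a \<noteq> 0" and below: "\<And>z. z \<in> Z \<Longrightarrow> inner a z \<le> b"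
    and "b \<le> inner a (c/2, c/2)"
    using separating_hyperplane_sets[of Z "{(c/2, c/2)}"] convex_hypograph_pair[OF conc]
      Z_down[OF y0, of 0 0]
    unfolding Z_def by fastforce
  define a1 a2 where "a1 = fst a" and "a2 = snd a"
  have inner_a: "inner a z = a1 * fst z + a2 * snd z" for z
    unfolding a1_def a2_def by (cases a, cases z) simp
  have "0 \<le> a1"
    using below[OF Z_down[OF y0, of _ 0]]
    by (intro nonneg_if_bounded_on_ray) (auto simp: inner_a algebra_simps)
  moreover have "0 \<le> a2"
    using below[OF Z_down[OF y0, of 0]]
    by (intro nonneg_if_bounded_on_ray) (auto simp: inner_a algebra_simps)
  moreover have "a1 \<noteq> 0 \<or> a2 \<noteq> 0"
    using \<open>a \<noteq> 0\<close> by (auto simp: a1_def a2_def prod_eq_iff)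
  ultimately have "0 < a1 + a2" by linarith
  have "a1 * k y + a2 * h y < 0" if "y \<in> Y" for y
  proof -
    have "a1 * k y + a2 * h y \<le> (a1 + a2) * (c/2)"
      using below[OF Z_down[OF that, of 0 0]] \<open>b \<le> inner a (c/2, c/2)\<close>
      by (simp add: inner_a algebra_simps)
    also have "\<dots> < 0" using \<open>0 < a1 + a2\<close> \<open>c < 0\<close> by (simp add: mult_pos_neg)
    finally show ?thesis .
  qed
  with \<open>0 \<le> a1\<close> \<open>0 \<le> a2\<close> \<open>0 < a1 + a2\<close> show ?thesis by blast
qed

lemma concave_pair_convex_combination_neg:
  fixes Y :: "'b::real_normed_vector set" and k h :: "'b \<Rightarrow> real"
  assumes "compact Y" "Y \<noteq> {}" "concave_on Y k" "concave_on Y h"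
    and "continuous_on Y k" "continuous_on Y h"
    and "\<And>y. y \<in> Y \<Longrightarrow> k y < 0 \<or> h y < 0"
  shows "\<exists>t\<in>{0..1}. \<forall>y\<in>Y. (1 - t) * k y + t * h y < 0"
proof -
  obtain a1 a2 where a: "0 \<le> a1" "0 \<le> a2" "0 < a1 + a2"
    and neg: "\<And>y. y \<in> Y \<Longrightarrow> a1 * k y + a2 * h y < 0"
    using concave_pair_nonneg_combination_neg[OF assms] by blast
  define t where "t = a2 / (a1 + a2)"
  have "1 - t = a1 / (a1 + a2)"
    using a by (simp add: t_def field_simps)
  then have "(1 - t) * k y + t * h y = (a1 * k y + a2 * h y) / (a1 + a2)" for y
    by (simp add: t_def add_divide_distrib)
  then have "(1 - t) * k y + t * h y < 0" if "y \<in> Y" for y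
    using neg[OF that] a by (simp add: divide_neg_pos)
  moreover have "t \<in> {0..1}"
    using a by (simp add: t_def)
  ultimately show ?thesis by blast
qed

(* Induction on I: on the part Y' of Y where h a is nonnegative the other functions of the
   family already suffice, and the resulting combination H is mixed with h a by the case of
   two functions. *)
lemma concave_family_convex_combination_neg:
  fixes h :: "'i \<Rightarrow> 'b::real_normed_vector \<Rightarrow> real"
  assumes "finite I" "compact Y" "Y \<noteq> {}"
    and "\<And>i. i \<in> I \<Longrightarrow> concave_on Y (h i)" "\<And>i. i \<in> I \<Longrightarrow> continuous_on Y (h i)"
    and "\<And>y. y \<in> Y \<Longrightarrow> \<exists>i\<in>I. h i y < 0"
  shows "\<exists>l. (\<forall>i\<in>I. 0 \<le> l i) \<and> sum l I = 1 \<and> (\<forall>y\<in>Y. (\<Sum>i\<in>I. l i * h i y) < 0)"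
  using assms
proof (induction I arbitrary: Y rule: finite_induct)
  case empty
  then show ?case by auto
next
  case (insert a I)
  define Y' where "Y' = {y\<in>Y. 0 \<le> h a y}"
  show ?case
  proof (cases "Y' = {}")
    case True
    have "(\<Sum>i\<in>insert a I. (if i = a then 1 else 0) * h i y) = h a y" for y
      using insert.hyps by (auto intro!: sum.neutral)
    with True show ?thesis
      using insert.hyps by (intro exI[of _ "\<lambda>i. if i = a then 1 else 0"]) (auto simp: Y'_def)
  next
    case False
    have "convex Y"
      using insert.prems(3) by (blast dest: concave_on_imp_convex)
    have "compact Y'" "convex Y'"
      unfolding Y'_def using insert.prems
      by (auto intro: compact_superlevel_set convex_superlevel_set)
    moreover have "\<And>i. i \<in> I \<Longrightarrow> concave_on Y' (h i)" "\<And>i. i \<in> I \<Longrightarrow> continuous_on Y' (h i)"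
      using insert.prems(3,4) \<open>convex Y'\<close>
      by (auto simp: Y'_def intro: concave_on_subset continuous_on_subset)
    moreover have "\<And>y. y \<in> Y' \<Longrightarrow> \<exists>i\<in>I. h i y < 0"
      using insert.prems(5) by (force simp: Y'_def)
    ultimately obtain l' where l': "\<forall>i\<in>I. 0 \<le> l' i" "sum l' I = 1"
      and neg': "\<forall>y\<in>Y'. (\<Sum>i\<in>I. l' i * h i y) < 0"
      using insert.IH False by blast
    define H where "H y = (\<Sum>i\<in>I. l' i * h i y)" for y
    have "concave_on Y H"
      unfolding H_def using insert l' \<open>convex Y\<close> by (intro concave_on_sum_scaled) auto
    moreover have "continuous_on Y H"
      unfolding H_def using insert.prems(4) by (intro continuous_intros) auto
    moreover have "h a y < 0 \<or> H y < 0" if "y \<in> Y" for y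
      using neg' that by (force simp: Y'_def H_def)
    moreover have "concave_on Y (h a)" "continuous_on Y (h a)"
      using insert.prems(3,4) by auto
    ultimately obtain t where t: "t \<in> {0..1}" and "\<forall>y\<in>Y. (1 - t) * h a y + t * H y < 0"
      using concave_pair_convex_combination_neg[OF insert.prems(1,2)] by metis
    moreover have "(\<Sum>i\<in>insert a I. (if i = a then 1 - t else t * l' i) * h i y) = (1 - t) * h a y + t * H y" for y
      using insert.hyps by (auto simp: H_def sum_distrib_left mult.assoc intro!: sum.cong)
    moreover have "(\<Sum>i\<in>insert a I. if i = a then 1 - t else t * l' i) = 1"
    proof -
      have "(\<Sum>i\<in>I. if i = a then 1 - t else t * l' i) = t * sum l' I"
        using insert.hyps by (auto simp: sum_distrib_left intro!: sum.cong)
      with insert.hyps l'(2) show ?thesis by simp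
    qed
    ultimately show ?thesis
      using l'(1) by (intro exI[of _ "\<lambda>i. if i = a then 1 - t else t * l' i"]) auto
  qed
qed

section \<open>Saddle points\<close>

definition sup_lovasz :: "nat \<Rightarrow> 'b set \<Rightarrow> (nat set \<Rightarrow> 'b \<Rightarrow> real) \<Rightarrow> (nat \<Rightarrow> real) \<Rightarrow> real" where
  "sup_lovasz n Y f x = (SUP y\<in>Y. lovasz n (\<lambda>S. f S y) x)"

lemma continuous_attains_SUP:
  fixes g :: "'b::topological_space \<Rightarrow> real"
  assumes "compact Y" "Y \<noteq> {}" "continuous_on Y g"
  shows "\<exists>y\<in>Y. (SUP y\<in>Y. g y) = g y \<and> (\<forall>y'\<in>Y. g y' \<le> g y)"
proof -
  obtain y where "y \<in> Y" "\<And>y'. y' \<in> Y \<Longrightarrow> g y' \<le> g y"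
    using continuous_attains_sup[OF assms] by blast
  moreover from this have "(SUP y\<in>Y. g y) = g y" by (intro cSup_eq_maximum) auto
  ultimately show ?thesis by blast
qed

lemma sup_lovasz_attained:
  assumes "compact Y" "Y \<noteq> {}" "\<And>S. S \<subseteq> {1..n} \<Longrightarrow> continuous_on Y (f S)"
  shows "\<exists>y\<in>Y. sup_lovasz n Y f x = lovasz n (\<lambda>S. f S y) x \<and>
    (\<forall>y'\<in>Y. lovasz n (\<lambda>S. f S y') x \<le> lovasz n (\<lambda>S. f S y) x)"
  using continuous_attains_SUP[OF assms(1,2) continuous_on_lovasz[OF assms(3)]]
  unfolding sup_lovasz_def .

lemma sup_lovasz_min_at_common_minimiser:
  assumes "compact Y" "Y \<noteq> {}" "\<And>S. S \<subseteq> {1..n} \<Longrightarrow> continuous_on Y (f S)"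
    and min: "\<forall>y\<in>Y. \<forall>x\<in>X. lovasz n (\<lambda>S. f S y) x0 \<le> lovasz n (\<lambda>S. f S y) x"
  shows "\<forall>x\<in>X. sup_lovasz n Y f x0 \<le> sup_lovasz n Y f x"
proof
  fix x assume "x \<in> X"
  have attained: "\<exists>y\<in>Y. sup_lovasz n Y f x = lovasz n (\<lambda>S. f S y) x \<and>
      (\<forall>y'\<in>Y. lovasz n (\<lambda>S. f S y') x \<le> lovasz n (\<lambda>S. f S y) x)" for x
    using assms(1-3) by (rule sup_lovasz_attained)
  obtain y0 where "y0 \<in> Y" and y0: "sup_lovasz n Y f x0 = lovasz n (\<lambda>S. f S y0) x0"
    using attained by blast
  obtain y where y: "sup_lovasz n Y f x = lovasz n (\<lambda>S. f S y) x"
    and max: "\<forall>y'\<in>Y. lovasz n (\<lambda>S. f S y') x \<le> lovasz n (\<lambda>S. f S y) x"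
    using attained by blast
  have "sup_lovasz n Y f x0 \<le> lovasz n (\<lambda>S. f S y0) x"
    using min \<open>y0 \<in> Y\<close> \<open>x \<in> X\<close> y0 by simp
  also have "\<dots> \<le> sup_lovasz n Y f x"
    using max \<open>y0 \<in> Y\<close> y by simp
  finally show "sup_lovasz n Y f x0 \<le> sup_lovasz n Y f x" .
qed

lemma saddle_point_of_vertex_minimiser:
  fixes Y :: "'b::real_normed_vector set" and f :: "nat set \<Rightarrow> 'b \<Rightarrow> real"
  assumes Y: "compact Y" "Y \<noteq> {}"
    and submod: "\<And>y. y \<in> Y \<Longrightarrow> submodular n (\<lambda>S. f S y)"
    and conc: "\<And>S. S \<subseteq> {1..n} \<Longrightarrow> concave_on Y (f S)"
    and cont: "\<And>S. S \<subseteq> {1..n} \<Longrightarrow> continuous_on Y (f S)"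
    and S: "S \<subseteq> {1..n}"
    and min: "\<And>x. x \<in> unit_cube n \<Longrightarrow> sup_lovasz n Y f (ind_vec S) \<le> sup_lovasz n Y f x"
  shows "\<exists>y\<in>Y. (\<forall>y'\<in>Y. f S y' \<le> f S y) \<and> (\<forall>T. T \<subseteq> {1..n} \<longrightarrow> f S y \<le> f T y)"
proof -
  have attained: "\<exists>y\<in>Y. sup_lovasz n Y f x = lovasz n (\<lambda>T. f T y) x \<and>
      (\<forall>y'\<in>Y. lovasz n (\<lambda>T. f T y') x \<le> lovasz n (\<lambda>T. f T y) x)" for x
    using Y cont by (rule sup_lovasz_attained)
  obtain yS where "yS \<in> Y" and v: "sup_lovasz n Y f (ind_vec S) = f S yS"
    and max: "\<forall>y'\<in>Y. f S y' \<le> f S yS"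
    using attained[of "ind_vec S"] unfolding lovasz_ind_vec[OF S] by blast
  define v where "v = f S yS"
  have "\<exists>y\<in>Y. \<forall>T. T \<subseteq> {1..n} \<longrightarrow> v \<le> f T y"
  proof (rule ccontr)
    assume "\<not> ?thesis"
    then have "\<exists>T\<in>Pow {1..n}. f T y - v < 0" if "y \<in> Y" for y
      using that by (auto simp: not_le)
    moreover have "concave_on Y (\<lambda>y. f T y - v)" if "T \<in> Pow {1..n}" for T
      using conc[of T] that
      by (intro concave_on_diff) (auto simp: convex_on_const dest: concave_on_imp_convex)
    moreover have "continuous_on Y (\<lambda>y. f T y - v)" if "T \<in> Pow {1..n}" for T
      using cont that by (auto intro!: continuous_intros)
    ultimately obtain l where l: "\<forall>T\<in>Pow {1..n}. 0 \<le> l T" "sum l (Pow {1..n}) = 1"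
      and neg: "\<forall>y\<in>Y. (\<Sum>T\<in>Pow {1..n}. l T * (f T y - v)) < 0"
      using concave_family_convex_combination_neg[of "Pow {1..n}" Y "\<lambda>T y. f T y - v"] Y
      by blast
    define x where "x i = (\<Sum>T\<in>Pow {1..n}. l T * ind_vec T i)" for i
    have below_v: "lovasz n (\<lambda>T. f T y) x < v" if "y \<in> Y" for y
    proof -
      have "lovasz n (\<lambda>T. f T y) x \<le> (\<Sum>T\<in>Pow {1..n}. l T * f T y)"
        unfolding x_def using l submod[OF that] by (intro lovasz_le_convex_combination) auto
      also have "\<dots> = (\<Sum>T\<in>Pow {1..n}. l T * (f T y - v)) + v"
      proof -
        have "(\<Sum>T\<in>Pow {1..n}. l T * v) = v" using l(2) by (simp flip: sum_distrib_right)
        then show ?thesis by (simp add: right_diff_distrib sum_subtractf)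
      qed
      also have "\<dots> < v" using neg that by simp
      finally show ?thesis .
    qed
    have "x \<in> unit_cube n"
      unfolding x_def using l by (intro sum_ind_vec_in_unit_cube) auto
    then have "v \<le> sup_lovasz n Y f x"
      using min v by (simp add: v_def)
    moreover obtain yx where "yx \<in> Y" "sup_lovasz n Y f x = lovasz n (\<lambda>T. f T yx) x"
      using attained by blast
    ultimately show False
      using below_v[of yx] by simp
  qed
  then obtain y where "y \<in> Y" and above: "\<And>T. T \<subseteq> {1..n} \<Longrightarrow> v \<le> f T y" by blast
  moreover have "f S y = v"
    using max \<open>y \<in> Y\<close> above[OF S] unfolding v_def by (intro antisym) auto
  ultimately show ?thesis using max by (metis v_def)
qed

theorem proposition2:
  fixes n :: nat
    and Y :: "(real ^ 'm) set"
    and f :: "nat set \<Rightarrow> real ^ 'm \<Rightarrow> real"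
    and zeta :: "(nat \<Rightarrow> real) \<Rightarrow> real"
  assumes Y_ne: "Y \<noteq> {}" and Y_convex: "convex Y" and Y_compact: "compact Y"
    and f_submod: "\<And>y. submodular n (\<lambda>S. f S y)"
    and f_concave: "\<And>S. S \<subseteq> {1..n} \<Longrightarrow> concave_on UNIV (f S)"
    and f_cont: "\<And>S. S \<subseteq> {1..n} \<Longrightarrow> continuous_on UNIV (f S)"
    and zeta_def: "\<And>x. zeta x = (SUP y\<in>Y. lovasz n (\<lambda>S. f S y) x)"
    and cases:
      "(\<exists>g. submodular n g \<and> (\<forall>x\<in>unit_cube n. zeta x = lovasz n g x))
       \<or> (\<exists>S. S \<subseteq> {1..n} \<and> (\<forall>x\<in>unit_cube n. zeta (ind_vec S) \<le> zeta x))
       \<or> (\<exists>S. S \<subseteq> {1..n} \<and> (\<forall>y\<in>Y. \<forall>x\<in>unit_cube n.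
              lovasz n (\<lambda>T. f T y) (ind_vec S) \<le> lovasz n (\<lambda>T. f T y) x))"
  shows "(\<exists>x\<in>unit_cube n. \<forall>x'\<in>unit_cube n. zeta x \<le> zeta x')
         \<and> (INF x\<in>unit_cube n. zeta x) = (INF S\<in>Pow {1..n}. zeta (ind_vec S))
         \<and> (\<exists>S y. S \<subseteq> {1..n} \<and> y \<in> Y \<and>
              (\<forall>y'\<in>Y. f S y' \<le> f S y) \<and> (\<forall>T. T \<subseteq> {1..n} \<longrightarrow> f S y \<le> f T y))"
proof -
  have conc: "concave_on Y (f S)" and cont: "continuous_on Y (f S)" if "S \<subseteq> {1..n}" for S
    using f_concave[OF that] f_cont[OF that] Y_convex
    by (auto intro: concave_on_subset continuous_on_subset)
  have zeta: "zeta = sup_lovasz n Y f"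
    using zeta_def by (auto simp: sup_lovasz_def)
  have "\<exists>S\<subseteq>{1..n}. \<forall>x\<in>unit_cube n. zeta (ind_vec S) \<le> zeta x"
    using cases
  proof (elim disjE exE conjE)
    fix g assume "\<forall>x\<in>unit_cube n. zeta x = lovasz n g x"
    with lovasz_attains_min_at_vertex[of n g] ind_vec_in_unit_cube show ?thesis by metis
  next
    fix S assume "S \<subseteq> {1..n}" and common_minimiser: "\<forall>y\<in>Y. \<forall>x\<in>unit_cube n.
      lovasz n (\<lambda>T. f T y) (ind_vec S) \<le> lovasz n (\<lambda>T. f T y) x"
    with sup_lovasz_min_at_common_minimiser[OF Y_compact Y_ne cont common_minimiser] show ?thesis
      unfolding zeta by blast
  qed blast
  then obtain S where S: "S \<subseteq> {1..n}" and min: "\<And>x. x \<in> unit_cube n \<Longrightarrow> zeta (ind_vec S) \<le> zeta x"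
    by blast
  have "\<exists>y\<in>Y. (\<forall>y'\<in>Y. f S y' \<le> f S y) \<and> (\<forall>T. T \<subseteq> {1..n} \<longrightarrow> f S y \<le> f T y)"
    using saddle_point_of_vertex_minimiser[OF Y_compact Y_ne f_submod conc cont S] min
    unfolding zeta by blast
  moreover have "(INF x\<in>unit_cube n. zeta x) = zeta (ind_vec S)"
    and "(INF T\<in>Pow {1..n}. zeta (ind_vec T)) = zeta (ind_vec S)"
    using S min ind_vec_in_unit_cube by (auto intro!: cInf_eq_minimum)
  ultimately show ?thesis
    using S min ind_vec_in_unit_cube[OF S] by (intro conjI bexI[of _ "ind_vec S"]) auto
qed

end
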